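(* Let $b,c\ge 0$ and consider the system $$\dot x=x(1-y+cx),\qquad \dot y=y(-1+x),\qquad \dot z=-bz.$$ Let $f\in\mathbb{C}[x,y,z]$ be an irreducible Darboux polynomial of degree greater than one with cofactor $k=\alpha_0+\alpha_1x+\alpha_2y+\alpha_3z$, $\alpha_i\in\mathbb{C}$. Then $\alpha_0=\alpha_1=\alpha_2=\alpha_3=0$.
   Context: A Darboux polynomial of the vector field $x(1-y+cx)\partial_x+y(-1+x)\partial_y-bz\partial_z$ is a polynomial $f$ with $x(1-y+cx)f_x+y(-1+x)f_y-bzf_z=kf$ for a polynomial cofactor $k$ (here of degree at most one). *)

theory Defs
  imports Complex_Main "HOL-Computational_Algebra.Polynomial"
begin

text \<open>C[x,y,z] is represented as complex poly poly poly: the outermost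
variable is z, the middle one y, the innermost one x.\<close>

type_synonym cpoly3 = "complex poly poly poly"

definition PX :: cpoly3 where "PX = [:[:[:0, 1:]:]:]"
definition PY :: cpoly3 where "PY = [:[:0, 1:]:]"
definition PZ :: cpoly3 where "PZ = [:0, 1:]"
definition cst :: "complex \<Rightarrow> cpoly3" where "cst a = [:[:[:a:]:]:]"

definition dX :: "cpoly3 \<Rightarrow> cpoly3" where "dX f = map_poly (map_poly pderiv) f"
definition dY :: "cpoly3 \<Rightarrow> cpoly3" where "dY f = map_poly pderiv f"
definition dZ :: "cpoly3 \<Rightarrow> cpoly3" where "dZ f = pderiv f"

text \<open>Total degree (degree of the zero polynomial is 0).\<close>
definition tdeg2 :: "complex poly poly \<Rightarrow> nat" where
  "tdeg2 p = Max ({0} \<union> {j + degree (coeff p j) | j. coeff p j \<noteq> 0})"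
definition tdeg :: "cpoly3 \<Rightarrow> nat" where
  "tdeg f = Max ({0} \<union> {k + tdeg2 (coeff f k) | k. coeff f k \<noteq> 0})"

end

theory Submission
  imports Defs
begin

text \<open>Write f(i,j,l) for the coefficient of x^i y^j z^l. Comparing coefficients turns the
  Darboux equation into a linear recurrence linking f(i,j,l) with f(i-1,j,l), f(i,j-1,l) and
  f(i,j,l-1), and irreducibility together with degree > 1 means that none of x, y, z divides f.
  The top z-layer of the recurrence gives \<alpha>3 = 0. If \<alpha>2 were nonzero, a nonzero coefficient
  of the x-free part of f would propagate to arbitrarily high powers of y. Once \<alpha>2 = \<alpha>3 = 0,
  in every nonzero layer z^l the x-free part is a single monomial y^j0 z^l, which forces
  \<alpha>0 + b l = -j0, and the x^1-part of the layer then forces \<alpha>1 = j0. The lowest power x^i of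
  the y-free part of the same layer gives \<alpha>0 + b l = i, so i = j0 = 0; hence \<alpha>1 = 0, and the
  layer l = 0 gives \<alpha>0 = 0.\<close>

definition coeff3 :: "cpoly3 \<Rightarrow> nat \<Rightarrow> nat \<Rightarrow> nat \<Rightarrow> complex" where
  "coeff3 p i j l = coeff (coeff (coeff p l) j) i"

lemma poly3_eqI: "(\<And>i j l. coeff3 p i j l = coeff3 q i j l) \<Longrightarrow> p = q"
  by (simp add: coeff3_def poly_eq_iff)

lemma coeff3_nonzero_iff: "coeff p l \<noteq> 0 \<longleftrightarrow> (\<exists>i j. coeff3 p i j l \<noteq> 0)"
  by (auto simp: coeff3_def poly_eq_iff)

lemma coeff3_eq_0_if_degree_less: "degree p < l \<Longrightarrow> coeff3 p i j l = 0"
  by (simp add: coeff3_def coeff_eq_0)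

lemma coeff3_add [simp]: "coeff3 (p + q) i j l = coeff3 p i j l + coeff3 q i j l"
  and coeff3_diff [simp]: "coeff3 (p - q) i j l = coeff3 p i j l - coeff3 q i j l"
  and coeff3_cst_mult [simp]: "coeff3 (cst a * p) i j l = a * coeff3 p i j l"
  by (simp_all add: coeff3_def cst_def)

lemma coeff3_PX_mult [simp]: "coeff3 (PX * p) i j l = (if i = 0 then 0 else coeff3 p (i - 1) j l)"
  and coeff3_PY_mult [simp]: "coeff3 (PY * p) i j l = (if j = 0 then 0 else coeff3 p i (j - 1) l)"
  and coeff3_PZ_mult [simp]: "coeff3 (PZ * p) i j l = (if l = 0 then 0 else coeff3 p i j (l - 1))"
  by (simp_all add: coeff3_def PX_def PY_def PZ_def coeff_pCons split: nat.split)

lemma coeff3_dX: "coeff3 (dX p) i j l = of_nat (Suc i) * coeff3 p (Suc i) j l"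
  by (simp add: coeff3_def dX_def coeff_map_poly coeff_pderiv)

lemma coeff3_dY: "coeff3 (dY p) i j l = of_nat (Suc j) * coeff3 p i (Suc j) l"
  by (simp add: coeff3_def dY_def coeff_map_poly coeff_pderiv of_nat_mult_conv_smult del: of_nat_Suc)

lemma coeff3_dZ: "coeff3 (dZ p) i j l = of_nat (Suc l) * coeff3 p i j (Suc l)"
  by (simp add: coeff3_def dZ_def coeff_pderiv of_nat_mult_conv_smult del: of_nat_Suc)

lemma coeff3_PX_dX: "coeff3 (PX * dX p) i j l = of_nat i * coeff3 p i j l"
  by (cases i) (simp_all add: coeff3_dX del: of_nat_Suc)

lemma coeff3_PY_dY: "coeff3 (PY * dY p) i j l = of_nat j * coeff3 p i j l"
  by (cases j) (simp_all add: coeff3_dY del: of_nat_Suc)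

lemma coeff3_PZ_dZ: "coeff3 (PZ * dZ p) i j l = of_nat l * coeff3 p i j l"
  by (cases l) (simp_all add: coeff3_dZ del: of_nat_Suc)

lemma tdeg2_monom:
  assumes "p \<noteq> 0"
  shows "tdeg2 (monom p n) = n + degree p"
proof -
  have "{j + degree (coeff (monom p n) j) | j. coeff (monom p n) j \<noteq> 0} = {n + degree p}"
    using assms by (auto simp: coeff_monom)
  then show ?thesis by (simp add: tdeg2_def)
qed

lemma tdeg_monom:
  assumes "q \<noteq> 0"
  shows "tdeg (monom q n) = n + tdeg2 q"
proof -
  have "{k + tdeg2 (coeff (monom q n) k) | k. coeff (monom q n) k \<noteq> 0} = {n + tdeg2 q}"
    using assms by (auto simp: coeff_monom)
  then show ?thesis by (simp add: tdeg_def)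
qed

lemma tdeg_variable_mult_cst:
  assumes "v \<in> {PX, PY, PZ}" and "a \<noteq> 0"
  shows "tdeg (v * cst a) = 1"
proof -
  have "PX * cst a = monom (monom (monom a 1) 0) 0"
    and "PY * cst a = monom (monom (monom a 0) 1) 0"
    and "PZ * cst a = monom (monom (monom a 0) 0) 1"
    by (simp_all add: PX_def PY_def PZ_def cst_def monom_0 monom_Suc)
  then show ?thesis
    using assms by (auto simp: tdeg_monom tdeg2_monom degree_monom_eq)
qed

lemma PX_dvd_if_coeff3_x0_eq_0:
  assumes "\<And>j l. coeff3 p 0 j l = 0"
  shows "PX dvd p"
proof
  show "p = PX * map_poly (map_poly (poly_shift 1)) p"
  proof (rule poly3_eqI)
    fix i j l
    show "coeff3 p i j l = coeff3 (PX * map_poly (map_poly (poly_shift 1)) p) i j l"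
      unfolding coeff3_PX_mult using assms by (auto simp: coeff3_def coeff_map_poly coeff_poly_shift)
  qed
qed

lemma PY_dvd_if_coeff3_y0_eq_0:
  assumes "\<And>i l. coeff3 p i 0 l = 0"
  shows "PY dvd p"
proof
  show "p = PY * map_poly (poly_shift 1) p"
  proof (rule poly3_eqI)
    fix i j l
    show "coeff3 p i j l = coeff3 (PY * map_poly (poly_shift 1) p) i j l"
      unfolding coeff3_PY_mult using assms by (auto simp: coeff3_def coeff_map_poly coeff_poly_shift)
  qed
qed

lemma PZ_dvd_iff_coeff_0: "PZ dvd p \<longleftrightarrow> coeff p 0 = 0"
  using dvd_iff_poly_eq_0[of 0 p] by (simp add: PZ_def poly_0_coeff_0)

lemma irreducible_not_dvd_variable:
  assumes "irreducible f" and "tdeg f > 1" and v: "v \<in> {PX, PY, PZ}"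
  shows "\<not> v dvd f"
proof
  assume "v dvd f"
  then obtain g where f: "f = v * g" by (elim dvdE)
  have "\<not> is_unit v" using v by (auto simp: is_unit_poly_iff PX_def PY_def PZ_def)
  then have "is_unit g" using assms(1) f irreducibleD by blast
  then have "\<exists>a. a \<noteq> 0 \<and> g = cst a" by (auto simp: is_unit_poly_iff cst_def)
  then obtain a where "a \<noteq> 0" "g = cst a" by blast
  then show False using assms f tdeg_variable_mult_cst by simp
qed

lemma coeff3_eq_0_if_nonzero_propagates:
  assumes "\<And>n. coeff3 p i n l \<noteq> 0 \<Longrightarrow> coeff3 p i (Suc n) l \<noteq> 0"
  shows "coeff3 p i j l = 0"
proof (rule ccontr)
  assume "coeff3 p i j l \<noteq> 0"
  then have "coeff3 p i (j + n) l \<noteq> 0" for n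
    by (induction n) (simp_all add: assms)
  moreover have "coeff3 p i (j + Suc (degree (coeff p l))) l = 0"
    by (simp add: coeff3_def coeff_eq_0)
  ultimately show False by blast
qed

context
  fixes f :: cpoly3 and b c a0 a1 a2 a3 :: complex
  assumes darboux: "PX * (1 - PY + cst c * PX) * dX f + PY * (PX - 1) * dY f - cst b * PZ * dZ f
    = (cst a0 + cst a1 * PX + cst a2 * PY + cst a3 * PZ) * f"
begin

lemma darboux_coeff3_rec:
  "(of_nat i - of_nat j - b * of_nat l - a0) * coeff3 f i j l
     + (if i = 0 then 0 else (c * of_nat (i - 1) + of_nat j - a1) * coeff3 f (i - 1) j l)
   = (if j = 0 then 0 else (of_nat i + a2) * coeff3 f i (j - 1) l)
     + (if l = 0 then 0 else a3 * coeff3 f i j (l - 1))"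
proof -
  \<comment> \<open>Abstracting the Euler operators keeps \<open>coeff3_PX_mult\<close> from splitting \<open>PX * dX f\<close>.\<close>
  define u v w where "u = PX * dX f" and "v = PY * dY f" and "w = PZ * dZ f"
  have "u - PY * u + cst c * (PX * u) + PX * v - v - cst b * w
    = cst a0 * f + cst a1 * (PX * f) + cst a2 * (PY * f) + cst a3 * (PZ * f)"
    using darboux by (simp add: u_def v_def w_def algebra_simps)
  then have "coeff3 (u - PY * u + cst c * (PX * u) + PX * v - v - cst b * w) i j l
    = coeff3 (cst a0 * f + cst a1 * (PX * f) + cst a2 * (PY * f) + cst a3 * (PZ * f)) i j l"
    by (rule arg_cong)
  moreover have "coeff3 u i j l = of_nat i * coeff3 f i j l"
    and "coeff3 v i j l = of_nat j * coeff3 f i j l"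
    and "coeff3 w i j l = of_nat l * coeff3 f i j l" for i j l
    unfolding u_def v_def w_def by (rule coeff3_PX_dX coeff3_PY_dY coeff3_PZ_dZ)+
  ultimately show ?thesis by simp (auto simp: algebra_simps neg_eq_iff_add_eq_0)
qed

lemma cofactor_z_eq_0:
  assumes "f \<noteq> 0"
  shows "a3 = 0"
proof -
  obtain i j where ij: "coeff3 f i j (degree f) \<noteq> 0"
    using coeff3_nonzero_iff[of f "degree f"] leading_coeff_neq_0[OF assms] by blast
  have "a3 * coeff3 f i j (degree f) = 0"
    using darboux_coeff3_rec[of i j "Suc (degree f)"] by (simp add: coeff3_eq_0_if_degree_less cong: if_cong)
  then show ?thesis using ij by simp
qed

lemma cofactor_y_eq_0:
  assumes a3: "a3 = 0" and "\<not> PX dvd f"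
  shows "a2 = 0"
proof (rule ccontr)
  assume "a2 \<noteq> 0"
  obtain j l where "coeff3 f 0 j l \<noteq> 0"
    using assms(2) PX_dvd_if_coeff3_x0_eq_0 by blast
  moreover have "coeff3 f 0 j l = 0" for j
  proof (rule coeff3_eq_0_if_nonzero_propagates)
    fix n
    have "(- of_nat (Suc n) - b * of_nat l - a0) * coeff3 f 0 (Suc n) l = a2 * coeff3 f 0 n l"
      using darboux_coeff3_rec[of 0 "Suc n" l] a3 by simp
    then show "coeff3 f 0 n l \<noteq> 0 \<Longrightarrow> coeff3 f 0 (Suc n) l \<noteq> 0"
      using \<open>a2 \<noteq> 0\<close> by auto
  qed
  ultimately show False by blast
qed

context
  assumes a2: "a2 = 0" and a3: "a3 = 0"
begin

lemma cofactor_const_eq_if_coeff3_x0_nonzero: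
  assumes "coeff3 f 0 j l \<noteq> 0"
  shows "a0 + b * of_nat l = - of_nat j"
proof -
  have "(- of_nat j - b * of_nat l - a0) * coeff3 f 0 j l = 0"
    using darboux_coeff3_rec[of 0 j l] a2 a3 by simp
  then have "- of_nat j - b * of_nat l - a0 = 0" using assms by simp
  then show ?thesis by algebra
qed

lemma coeff3_x0_nonzero_if_coeff_nonzero:
  assumes "coeff f l \<noteq> 0"
  shows "\<exists>j. coeff3 f 0 j l \<noteq> 0"
proof -
  have "\<exists>i j. coeff3 f i j l \<noteq> 0" using assms coeff3_nonzero_iff by blast
  then obtain i where i: "\<exists>j. coeff3 f i j l \<noteq> 0" and below: "\<And>i'. i' < i \<Longrightarrow> coeff3 f i' j l = 0" for j
    using exists_least_iff[of "\<lambda>i. \<exists>j. coeff3 f i j l \<noteq> 0"] by blast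
  have "i = 0"
  proof (rule ccontr)
    assume "i \<noteq> 0"
    have "coeff3 f i j l = 0" for j
    proof (rule coeff3_eq_0_if_nonzero_propagates)
      fix n
      have "(of_nat i - of_nat (Suc n) - b * of_nat l - a0) * coeff3 f i (Suc n) l
          = of_nat i * coeff3 f i n l"
        using darboux_coeff3_rec[of i "Suc n" l] a2 a3 below[of "i - 1"] \<open>i \<noteq> 0\<close> by simp
      then show "coeff3 f i n l \<noteq> 0 \<Longrightarrow> coeff3 f i (Suc n) l \<noteq> 0"
        using \<open>i \<noteq> 0\<close> by auto
    qed
    then show False using i by blast
  qed
  then show ?thesis using i by blast
qed

lemma cofactor_x_eq_if_coeff3_x0_nonzero:
  assumes nz: "coeff3 f 0 j0 l \<noteq> 0"
  shows "a1 = of_nat j0"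
proof -
  have a0: "a0 = - of_nat j0 - b * of_nat l"
    using cofactor_const_eq_if_coeff3_x0_nonzero[OF nz] by algebra
  have row0: "coeff3 f 0 j l = 0" if "j \<noteq> j0" for j
    using cofactor_const_eq_if_coeff3_x0_nonzero[of j l] a0 that by auto
  have row1: "(of_nat (Suc j0) - of_nat j) * coeff3 f 1 j l + (of_nat j - a1) * coeff3 f 0 j l
      = (if j = 0 then 0 else coeff3 f 1 (j - 1) l)" for j
    using darboux_coeff3_rec[of 1 j l] a0 a2 a3 by (simp add: algebra_simps)
  have row1_below: "coeff3 f 1 j l = 0" if "j < j0" for j
    using that
  proof (induction j)
    case 0
    then show ?case using row1[of 0] row0[of 0] by (simp flip: of_nat_Suc)
  next
    case (Suc j)
    then show ?case using row1[of "Suc j"] row0[of "Suc j"] by simp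
  qed
  have "coeff3 f 1 j0 l = 0"
    using row1[of "Suc j0"] row0[of "Suc j0"] by simp
  then have "(of_nat j0 - a1) * coeff3 f 0 j0 l = 0"
    using row1[of j0] row1_below[of "j0 - 1"] by (cases j0) simp_all
  then show ?thesis using nz by simp
qed

lemma cofactor_x_eq_0:
  assumes "\<not> PY dvd f"
  shows "a1 = 0"
proof -
  obtain i l where "coeff3 f i 0 l \<noteq> 0"
    using assms PY_dvd_if_coeff3_y0_eq_0 by blast
  then obtain i where i: "coeff3 f i 0 l \<noteq> 0" and below: "\<And>i'. i' < i \<Longrightarrow> coeff3 f i' 0 l = 0"
    using exists_least_iff[of "\<lambda>i. coeff3 f i 0 l \<noteq> 0"] by blast
  have "(of_nat i - b * of_nat l - a0) * coeff3 f i 0 l = 0"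
    using darboux_coeff3_rec[of i 0 l] a3 below[of "i - 1"] by (cases "i = 0") simp_all
  then have "of_nat i - b * of_nat l - a0 = 0" using i by simp
  moreover obtain j where j: "coeff3 f 0 j l \<noteq> 0"
    using coeff3_x0_nonzero_if_coeff_nonzero coeff3_nonzero_iff i by blast
  ultimately have "of_nat i + of_nat j = (0 :: complex)"
    using cofactor_const_eq_if_coeff3_x0_nonzero[OF j] by algebra
  then have "j = 0" by (simp flip: of_nat_add)
  then show ?thesis using cofactor_x_eq_if_coeff3_x0_nonzero[OF j] by simp
qed

lemma cofactor_const_eq_0:
  assumes "\<not> PZ dvd f" and "a1 = 0"
  shows "a0 = 0"
proof -
  obtain j where j: "coeff3 f 0 j 0 \<noteq> 0"
    using assms(1) PZ_dvd_iff_coeff_0 coeff3_x0_nonzero_if_coeff_nonzero by blast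
  then have "j = 0" using cofactor_x_eq_if_coeff3_x0_nonzero[OF j] assms(2) by simp
  then show ?thesis using cofactor_const_eq_if_coeff3_x0_nonzero[OF j] by simp
qed

end

end

theorem lemma4p1:
  fixes b c :: real and f :: cpoly3 and a0 a1 a2 a3 :: complex
  assumes "b \<ge> 0" and "c \<ge> 0"
    and "irreducible f"
    and "tdeg f > 1"
    and "PX * (1 - PY + cst (complex_of_real c) * PX) * dX f + PY * (PX - 1) * dY f
           - cst (complex_of_real b) * PZ * dZ f
         = (cst a0 + cst a1 * PX + cst a2 * PY + cst a3 * PZ) * f"
  shows "a0 = 0 \<and> a1 = 0 \<and> a2 = 0 \<and> a3 = 0"
proof -
  note darboux = assms(5)
  have "f \<noteq> 0" using assms(3) by auto
  have not_dvd: "\<not> v dvd f" if "v \<in> {PX, PY, PZ}" for v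
    using irreducible_not_dvd_variable[OF assms(3,4) that] .
  have a3: "a3 = 0" using cofactor_z_eq_0[OF darboux \<open>f \<noteq> 0\<close>] .
  have a2: "a2 = 0" using cofactor_y_eq_0[OF darboux a3] not_dvd by blast
  have a1: "a1 = 0" using cofactor_x_eq_0[OF darboux a2 a3] not_dvd by blast
  have a0: "a0 = 0" using cofactor_const_eq_0[OF darboux a2 a3 _ a1] not_dvd by blast
  show ?thesis using a0 a1 a2 a3 by blast
qed

end
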